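(* Let $c>0$ be a constant. There is a constant $C>0$ (depending only on $c$) such that the following holds. Let $Q$ be a set of at most $n$ integers, each of absolute value at most $2^{cn}$, and let $1\le k\le |Q|$ be such that $\left|w\left(\binom{Q}{k}\right)\right|\ge |w(2^Q)|/|Q|$. Let $X$ be a real number with $4\le X\le |w(2^Q)|$ and let $p$ be a uniformly random prime in $[X/2,X]$. Then with probability at least $9/10$ over the choice of $p$, \[\left|\left\{a\in\mathbb{Z}_p \colon \text{there exists } M'\subseteq Q,\ |M'|=k,\ w(M')\equiv a \pmod p\right\}\right|\ \ge\ \frac{p}{C n^2}.\]
   Context: For a finite set of integers $S$, $w(S)=\sum_{a\in S}a$; $2^S$ is the set of all subsets of $S$; $\binom{S}{k}$ is the set of all $k$-element subsets of $S$; for a family $\mathcal F$ of sets, $w(\mathcal F)=\{w(A)\colon A\in\mathcal F\}$ (a set of distinct integers). $\mathbb Z_p$ is the set of residues modulo $p$. *)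

theory Defs
  imports Complex_Main "HOL-Computational_Algebra.Primes"
begin

definition w :: "int set \<Rightarrow> int" where
  "w S = (\<Sum>a\<in>S. a)"

definition subset_sums :: "int set \<Rightarrow> int set" where
  "subset_sums Q = w ` Pow Q"

definition k_subset_sums :: "int set \<Rightarrow> nat \<Rightarrow> int set" where
  "k_subset_sums Q k = w ` {A. A \<subseteq> Q \<and> card A = k}"

text \<open>Residues a in Z_p (represented by 0..p-1) hit by some k-subset sum modulo p\<close>
definition hit_residues :: "nat \<Rightarrow> int set \<Rightarrow> nat \<Rightarrow> int set" where
  "hit_residues p Q k = {a \<in> {0..<int p}. \<exists>M'. M' \<subseteq> Q \<and> card M' = k \<and> w M' mod int p = a mod int p}"

end

theory Submission
  imports Defs "HOL-Real_Asymp.Real_Asymp"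
begin

text \<open>
Let S be the set of k-subset sums of Q; then |S| \<ge> X/n, and every element of S has absolute
value at most B = n 2^(cn). Fix t \<approx> 2X/(C n^2) elements of S. A nonzero difference of two of them
is divisible by at most log(2B)/log(X/2) = O(n/log X) primes p \<ge> X/2, so summed over all primes in
[X/2, X] there are O(t^2 n/log X) collisions modulo p. A prime for which the t elements occupy
fewer than t/2 residues accounts for more than t/2 collisions, hence there are only
O(tn/log X) = O(X/(C n log X)) such primes, which for large C is at most a tenth of the
\<Omega>(X/log X) primes in [X/2, X]. The latter count is Chebyshev's bound, obtained from Erdos'
proof of Bertrand's postulate via the prime factorisation of the central binomial coefficient.
\<close>

section \<open>Chebyshev's lower bound for primes in \<open>[X/2, X]\<close>\<close>

lemma multiplicity_Suc_eq_card_prime_power_divisors: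
  assumes p: "prime (p::nat)" and lt: "Suc n < p ^ Suc m"
  shows "multiplicity p (Suc n) = card {j\<in>{1..m}. p ^ j dvd Suc n}"
proof -
  let ?e = "multiplicity p (Suc n)"
  have p1: "p > 1" using p prime_gt_1_nat by blast
  have "p ^ ?e \<le> Suc n" by (rule dvd_imp_le[OF multiplicity_dvd]) simp
  hence "?e \<le> m" using lt power_strict_increasing_iff[OF p1, of ?e "Suc m"] by linarith
  hence "{j\<in>{1..m}. p ^ j dvd Suc n} = {1..?e}"
    using p1 by (auto simp: power_dvd_iff_le_multiplicity)
  thus ?thesis by simp
qed

lemma multiplicity_fact:
  assumes p: "prime (p::nat)"
  shows "n < p ^ Suc m \<Longrightarrow> multiplicity p (fact n :: nat) = (\<Sum>j\<in>{1..m}. n div p ^ j)"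
proof (induction n)
  case 0
  then show ?case by simp
next
  case (Suc n)
  have p1: "p > 1" using p prime_gt_1_nat by blast
  have "multiplicity p (fact (Suc n) :: nat) = multiplicity p (Suc n * fact n :: nat)"
    by (simp add: fact_Suc)
  also have "\<dots> = multiplicity p (Suc n) + multiplicity p (fact n :: nat)"
    using p by (intro prime_elem_multiplicity_mult_distrib) auto
  also have "multiplicity p (fact n :: nat) = (\<Sum>j\<in>{1..m}. n div p ^ j)"
    using Suc by simp
  also have "multiplicity p (Suc n) = (\<Sum>j\<in>{1..m}. if p ^ j dvd Suc n then 1 else 0)"
    using multiplicity_Suc_eq_card_prime_power_divisors[OF p Suc.prems]
    by (simp add: sum.If_cases Int_def conj_commute)
  also have "Suc n div p ^ j = n div p ^ j + (if p ^ j dvd Suc n then 1 else 0)" for j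
    using p1 by (auto simp: div_Suc dvd_eq_mod_eq_0)
  hence "(\<Sum>j\<in>{1..m}. if p ^ j dvd Suc n then 1 else 0) + (\<Sum>j\<in>{1..m}. n div p ^ j)
           = (\<Sum>j\<in>{1..m}. Suc n div p ^ j)"
    by (simp add: sum.distrib)
  finally show ?case .
qed

lemma prod_primes_dvd:
  fixes n :: nat
  assumes "finite A" "\<forall>p\<in>A. prime p \<and> p dvd n"
  shows "\<Prod>A dvd n"
  using assms
proof (induction A rule: finite_induct)
  case empty
  then show ?case by simp
next
  case (insert p A)
  have p: "prime p" "p dvd n" using insert by auto
  have "\<not> p dvd \<Prod>A"
  proof
    assume "p dvd \<Prod>A"
    then obtain q where "q \<in> A" "p dvd q" using prime_dvd_prod_iff[OF insert(1) p(1), of id] by auto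
    with insert p(1) show False using primes_dvd_imp_eq by blast
  qed
  hence "coprime p (\<Prod>A)" using prime_imp_coprime p(1) by blast
  moreover have "\<Prod>A dvd n" using insert by auto
  ultimately show ?case using insert divides_mult p(2) by simp
qed

lemma binomial_odd_central_le: "(2*m+1) choose m \<le> 4 ^ m"
proof -
  have "(\<Sum>k\<in>{m, m+1}. (2*m+1) choose k) \<le> (\<Sum>k\<le>2*m+1. (2*m+1) choose k)"
    by (intro sum_mono2) auto
  also have "\<dots> = 2 ^ (2*m+1)" by (rule choose_row_sum)
  also have "(\<Sum>k\<in>{m, m+1}. (2*m+1) choose k) = 2 * ((2*m+1) choose m)"
    using binomial_symmetric[of m "2*m+1"] by simp
  finally show ?thesis by (simp add: power_mult power_add)
qed

lemma prime_dvd_binomial_odd_central: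
  assumes "prime p" "m + 1 < p" "p \<le> 2*m+1"
  shows "p dvd ((2*m+1) choose m)"
proof -
  have "fact m * fact (m+1) * ((2*m+1) choose m) = (fact (2*m+1) :: nat)"
    using binomial_fact_lemma[of m "2*m+1"] by (simp add: mult_2)
  moreover have "p dvd (fact (2*m+1) :: nat)"
    using assms by (intro dvd_fact) (auto simp: prime_gt_0_nat Suc_leI)
  ultimately have "p dvd fact m * fact (m+1) * ((2*m+1) choose m)" by metis
  moreover have "\<not> p dvd (fact m :: nat)" "\<not> p dvd (fact (m+1) :: nat)"
    using prime_dvd_fact_iff[OF assms(1), of m] prime_dvd_fact_iff[OF assms(1), of "m+1"] assms
    by linarith+
  ultimately show ?thesis using assms(1) by (metis prime_dvd_mult_iff)
qed

lemma primorial_le_4_pow: "(\<Prod>{p::nat. prime p \<and> p \<le> x}) \<le> 4 ^ x"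
proof (induction x rule: less_induct)
  case (less x)
  consider "x \<le> 2" | "x > 2" "even x" | m where "x > 2" "x = 2*m+1"
    by (metis not_le oddE)
  then show ?case
  proof cases
    case 1
    have "{p::nat. prime p \<and> p \<le> x} = (if x < 2 then {} else {2})"
      using 1 by (auto simp: le_eq_less_or_eq dest: prime_ge_2_nat)
    then show ?thesis using 1 by auto
  next
    case 2
    hence "{p::nat. prime p \<and> p \<le> x} = {p::nat. prime p \<and> p \<le> x - 1}"
      using prime_odd_nat by (auto simp: le_eq_less_or_eq)
    hence "\<Prod>{p::nat. prime p \<and> p \<le> x} \<le> 4 ^ (x - 1)" using less[of "x-1"] 2 by simp
    also have "\<dots> \<le> 4 ^ x" by (intro power_increasing) auto
    finally show ?thesis .
  next
    case (3 m)
    let ?A = "{p::nat. prime p \<and> p \<le> m+1}"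
    let ?B = "{p::nat. prime p \<and> m+1 < p \<and> p \<le> 2*m+1}"
    have "{p::nat. prime p \<and> p \<le> x} = ?A \<union> ?B" using 3 by auto
    hence "\<Prod>{p::nat. prime p \<and> p \<le> x} = \<Prod>?A * \<Prod>?B"
      by (simp add: prod.union_disjoint disjoint_iff)
    also have "\<Prod>?A \<le> 4 ^ (m+1)" using less[of "m+1"] 3 by simp
    also have "\<Prod>?B \<le> (2*m+1) choose m"
      using prime_dvd_binomial_odd_central by (intro dvd_imp_le prod_primes_dvd) auto
    also have "\<dots> \<le> 4 ^ m" by (rule binomial_odd_central_le)
    finally show ?thesis using 3 by (simp add: power_add mult_2 mult.assoc)
  qed
qed

lemma multiplicity_central_binomial:
  assumes p: "prime (p::nat)"
  shows "int (multiplicity p ((2*N) choose N))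
           = (\<Sum>j\<in>{1..2*N}. int (2*N div p^j) - 2 * int (N div p^j))"
proof -
  have "fact N * fact N * ((2*N) choose N) = (fact (2*N) :: nat)"
    using binomial_fact_lemma[of N "2*N"] by simp
  hence "multiplicity p (fact (2*N) :: nat) = multiplicity p (fact N * fact N * ((2*N) choose N) :: nat)"
    by simp
  also have "\<dots> = 2 * multiplicity p (fact N :: nat) + multiplicity p ((2*N) choose N)"
    using p by (simp add: prime_elem_multiplicity_mult_distrib)
  finally have "multiplicity p (fact (2*N) :: nat)
                  = 2 * multiplicity p (fact N :: nat) + multiplicity p ((2*N) choose N)" .
  moreover have "2*N < p ^ Suc (2*N)" "N < p ^ Suc (2*N)"
    using less_exp[of "Suc (2*N)"] power_mono[OF prime_ge_2_nat[OF p], of "Suc (2*N)"] by linarith+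
  ultimately have "int (multiplicity p ((2*N) choose N))
      = int (\<Sum>j\<in>{1..2*N}. 2*N div p ^ j) - 2 * int (\<Sum>j\<in>{1..2*N}. N div p ^ j)"
    by (simp only: multiplicity_fact[OF p])
  also have "\<dots> = (\<Sum>j\<in>{1..2*N}. int (2*N div p^j) - 2 * int (N div p^j))"
    by (simp add: sum_subtractf sum_distrib_left)
  finally show ?thesis .
qed

lemma double_div_sub_le_1:
  assumes "(d::nat) > 0"
  shows "int (2*N div d) - 2 * int (N div d) \<le> 1"
proof -
  have "2*N div d < 2 * (N div d) + 2"
    using assms div_less_iff_less_mult[of d N "Suc (N div d)"] by (subst div_less_iff_less_mult) auto
  thus ?thesis by linarith
qed

lemma prime_power_multiplicity_central_binomial_le:
  assumes p: "prime (p::nat)" and v: "multiplicity p ((2*N) choose N) > 0"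
  shows "p ^ multiplicity p ((2*N) choose N) \<le> 2*N"
proof (rule ccontr)
  let ?v = "multiplicity p ((2*N) choose N)"
  assume "\<not> ?thesis"
  hence big: "2*N < p ^ ?v" by simp
  have p1: "p > 1" using p prime_gt_1_nat by blast
  let ?t = "\<lambda>j. int (2*N div p^j) - 2 * int (N div p^j)"
  text \<open>Each term of Legendre's difference is at most 1, and vanishes once \<open>p\<^sup>j > 2N\<close>.\<close>
  have "int ?v = (\<Sum>j\<in>{1..2*N}. ?t j)" by (rule multiplicity_central_binomial[OF p])
  also have "\<dots> \<le> (\<Sum>j\<in>{1..2*N}. if j < ?v then 1 else 0)"
  proof (rule sum_mono)
    fix j
    show "?t j \<le> (if j < ?v then 1 else 0)"
    proof (cases "j < ?v")
      case False
      hence "p ^ ?v \<le> p ^ j" using p1 by (intro power_increasing) auto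
      then show ?thesis using big by simp
    qed (use double_div_sub_le_1[of "p^j" N] p1 in simp)
  qed
  also have "\<dots> = int (card ({1..2*N} \<inter> {j. j < ?v}))"
    by (simp add: sum.If_cases)
  also have "card ({1..2*N} \<inter> {j. j < ?v}) \<le> card {1..<?v}"
    by (intro card_mono) auto
  finally show False using v by simp
qed

lemma multiplicity_central_binomial_le_1:
  assumes p: "prime (p::nat)" and "2*N < p^2"
  shows "multiplicity p ((2*N) choose N) \<le> 1"
proof (rule ccontr)
  assume v: "\<not> ?thesis"
  hence "p^2 \<le> p ^ multiplicity p ((2*N) choose N)"
    using prime_gt_0_nat[OF p] by (intro power_increasing) auto
  moreover have "p ^ multiplicity p ((2*N) choose N) \<le> 2*N"
    using v by (intro prime_power_multiplicity_central_binomial_le[OF p]) auto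
  ultimately show False using \<open>2*N < p^2\<close> by linarith
qed

lemma multiplicity_central_binomial_eq_0:
  assumes p: "prime (p::nat)" and N: "N \<ge> 5" and "2*N < 3*p" "p \<le> N"
  shows "multiplicity p ((2*N) choose N) = 0"
proof -
  have p0: "p > 0" using p prime_gt_0_nat by blast
  have sq: "2*N < p^2"
  proof -
    have "4*(N*N) < 9*(p*p)" using \<open>2*N < 3*p\<close> mult_strict_mono[of "2*N" "3*p" "2*N" "3*p"]
      by (simp add: algebra_simps)
    moreover have "20*N \<le> 4*(N*N)" using mult_le_mono2[OF N, of "4*N"] by (simp add: algebra_simps)
    ultimately have "2*N < p*p" by linarith
    thus ?thesis by (simp add: power2_eq_square)
  qed
  have "int (2*N div p^j) - 2 * int (N div p^j) = 0" if "j \<ge> 1" for j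
  proof (cases "j = 1")
    case True
    have "2*N div p = 2" "N div p = 1"
      using assms by (auto intro!: div_nat_eqI)
    thus ?thesis using True by simp
  next
    case False
    hence "p^2 \<le> p^j" using that p0 by (intro power_increasing) auto
    thus ?thesis using sq by simp
  qed
  thus ?thesis using multiplicity_central_binomial[OF p, of N] by simp
qed

lemma prod_prime_powers_le_powr_sqrt:
  fixes m :: nat
  assumes "finite A" "1 \<le> m" "\<forall>p\<in>A. 0 < p \<and> p * p \<le> m \<and> p ^ v p \<le> m"
  shows "real (\<Prod>p\<in>A. p ^ v p) \<le> real m powr sqrt m"
proof -
  have m1: "real m \<ge> 1" using assms by simp
  have "A \<subseteq> {1..nat \<lfloor>sqrt m\<rfloor>}"
  proof
    fix p assume p: "p \<in> A"
    hence "real p ^ 2 \<le> m" using assms by (simp add: power2_eq_square flip: of_nat_mult)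
    hence "real p \<le> sqrt m" by (rule real_le_rsqrt)
    thus "p \<in> {1..nat \<lfloor>sqrt m\<rfloor>}" using p assms by (simp add: le_nat_floor Suc_le_eq)
  qed
  hence "card A \<le> nat \<lfloor>sqrt m\<rfloor>" using card_mono[of "{1..nat \<lfloor>sqrt m\<rfloor>}" A] by simp
  hence "real (card A) \<le> real (nat \<lfloor>sqrt m\<rfloor>)" by (simp only: of_nat_le_iff)
  also have "\<dots> \<le> sqrt m" by simp
  finally have "real (card A) \<le> sqrt m" .
  have "(\<Prod>p\<in>A. p ^ v p) \<le> m ^ card A" using assms by (intro prod_le_power) auto
  hence "real (\<Prod>p\<in>A. p ^ v p) \<le> real m ^ card A" by (metis of_nat_le_iff of_nat_power)
  also have "\<dots> = real m powr real (card A)" using m1 by (simp add: powr_realpow)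
  also have "\<dots> \<le> real m powr sqrt m" using \<open>real (card A) \<le> sqrt m\<close> m1 by (intro powr_mono) auto
  finally show ?thesis .
qed

text \<open>
  Erdos: in the factorisation of \<open>(2N choose N)\<close> the primes \<open>p \<le> \<surd>(2N)\<close> contribute prime powers
  \<open>\<le> 2N\<close>, the primes \<open>\<surd>(2N) < p \<le> 2N/3\<close> occur only to the first power, primes in
  \<open>(2N/3, N]\<close> do not occur, and the rest lie in \<open>(N, 2N]\<close>.\<close>

lemma central_binomial_le:
  assumes N: "N \<ge> 5"
  shows "real ((2*N) choose N)
           \<le> real (2*N) powr sqrt (2*N) * (4 powr (2*N/3)
              * real (2*N) ^ card {p. prime p \<and> N < p \<and> p \<le> 2*N})"
proof -
  define Cb where "Cb = (2*N) choose N"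
  define v where "v = (\<lambda>p. multiplicity p Cb)"
  define pf where "pf = prime_factors Cb"
  have pf: "prime p" "v p > 0" "p ^ v p \<le> 2*N" if "p \<in> pf" for p
    using that prime_power_multiplicity_central_binomial_le[of p N]
    unfolding pf_def v_def Cb_def by (auto simp: prime_factors_multiplicity)
  have pf_mid: "\<not> (2*N < 3*p \<and> p \<le> N)" if "p \<in> pf" for p
    using pf[OF that] multiplicity_central_binomial_eq_0[of p N] N unfolding v_def Cb_def by auto
  define A1 where "A1 = {p\<in>pf. p*p \<le> 2*N}"
  define A2 where "A2 = {p\<in>pf. 2*N < p*p \<and> 3*p \<le> 2*N}"
  define A3 where "A3 = {p\<in>pf. 2*N < p*p \<and> 2*N < 3*p}"
  have "Cb = (\<Prod>p\<in>pf. p ^ v p)"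
    unfolding pf_def v_def Cb_def by (rule prime_factorization_nat) simp
  also have "pf = A1 \<union> (A2 \<union> A3)" unfolding A1_def A2_def A3_def by auto
  also have "(\<Prod>p\<in>A1 \<union> (A2 \<union> A3). p ^ v p)
               = (\<Prod>p\<in>A1. p ^ v p) * ((\<Prod>p\<in>A2. p ^ v p) * (\<Prod>p\<in>A3. p ^ v p))"
    unfolding A1_def A2_def A3_def pf_def
    by (subst prod.union_disjoint; (subst prod.union_disjoint)?) auto
  finally have Cb: "Cb = (\<Prod>p\<in>A1. p ^ v p) * ((\<Prod>p\<in>A2. p ^ v p) * (\<Prod>p\<in>A3. p ^ v p))" .
  have b1: "real (\<Prod>p\<in>A1. p ^ v p) \<le> real (2*N) powr sqrt (2*N)"
    using pf prime_gt_0_nat N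
    by (intro prod_prime_powers_le_powr_sqrt) (auto simp: A1_def pf_def)
  have b2: "real (\<Prod>p\<in>A2. p ^ v p) \<le> 4 powr (2*N/3)"
  proof -
    have "v p = 1" if "p \<in> A2" for p
      using that pf[of p] multiplicity_central_binomial_le_1[of p N]
      unfolding A2_def v_def Cb_def by (force simp: power2_eq_square)
    hence "(\<Prod>p\<in>A2. p ^ v p) = \<Prod>A2" by simp
    also have "\<dots> \<le> \<Prod>{p::nat. prime p \<and> p \<le> 2*N div 3}"
      using pf prime_gt_0_nat
      by (intro dvd_imp_le prod_dvd_prod_subset) (auto simp: A2_def intro!: prod_pos)
    also have "\<dots> \<le> 4 ^ (2*N div 3)" by (rule primorial_le_4_pow)
    finally have "real (\<Prod>p\<in>A2. p ^ v p) \<le> 4 ^ (2*N div 3)"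
      by (metis of_nat_le_iff of_nat_power of_nat_numeral)
    also have "(4::real) ^ (2*N div 3) = 4 powr real (2*N div 3)" by (simp add: powr_realpow)
    also have "\<dots> \<le> 4 powr (2*N/3)" by (intro powr_mono) (simp_all add: real_of_nat_div)
    finally show ?thesis .
  qed
  have b3: "real (\<Prod>p\<in>A3. p ^ v p) \<le> real (2*N) ^ card {p. prime p \<and> N < p \<and> p \<le> 2*N}"
  proof -
    have "A3 \<subseteq> {p. prime p \<and> N < p \<and> p \<le> 2*N}"
    proof
      fix p assume p: "p \<in> A3"
      have "p ^ 1 \<le> p ^ v p" using pf[of p] p prime_gt_0_nat unfolding A3_def
        by (intro power_increasing) auto
      thus "p \<in> {p. prime p \<and> N < p \<and> p \<le> 2*N}"
        using pf[of p] pf_mid[of p] p unfolding A3_def by auto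
    qed
    hence "card A3 \<le> card {p. prime p \<and> N < p \<and> p \<le> 2*N}" by (intro card_mono) auto
    hence "(\<Prod>p\<in>A3. p ^ v p) \<le> (2*N) ^ card {p. prime p \<and> N < p \<and> p \<le> 2*N}"
      using pf N by (intro prod_le_power) (auto simp: A3_def)
    thus ?thesis by (metis of_nat_le_iff of_nat_power)
  qed
  show ?thesis
    unfolding Cb_def[symmetric] using b1 b2 b3
    by (subst Cb, simp only: of_nat_mult) (intro mult_mono, auto intro!: prod_nonneg mult_nonneg_nonneg)
qed

lemma card_primes_between_lower_bound:
  fixes N :: nat
  assumes N: "N \<ge> 5"
  shows "real (card {p. prime p \<and> N < p \<and> p \<le> 2*N}) * ln (2*N)
           \<ge> N * ln 4 / 3 - ln (2*N) - sqrt (2*N) * ln (2*N)"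
proof -
  let ?P = "{p. prime p \<and> N < p \<and> p \<le> 2*N}"
  have "4 ^ N / (2 * real N) \<le> real ((2*N) choose N)"
    using N by (intro central_binomial_lower_bound) auto
  also note central_binomial_le[OF N]
  finally have "ln (4 ^ N / (2 * real N))
      \<le> ln (real (2*N) powr sqrt (2*N) * (4 powr (2*N/3) * real (2*N) ^ card ?P))"
    using N by (subst ln_le_cancel_iff) auto
  hence "N * ln 4 - ln (2*N) \<le> sqrt (2*N) * ln (2*N) + (2*N/3 * ln 4 + card ?P * ln (2*N))"
    using N by (simp add: ln_div ln_mult ln_realpow ring_distribs)
  thus ?thesis by linarith
qed

definition dyadic_primes :: "real \<Rightarrow> nat set" where
  "dyadic_primes X = {p. prime p \<and> X / 2 \<le> real p \<and> real p \<le> X}"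

lemma finite_dyadic_primes: "finite (dyadic_primes X)"
  unfolding dyadic_primes_def
  by (rule finite_subset[of _ "{..nat \<lceil>X\<rceil>}"]) (auto, linarith)

lemma eventually_card_dyadic_primes_ge:
  "eventually (\<lambda>X. X / (40 * ln X) \<le> real (card (dyadic_primes X))) at_top"
proof -
  have "eventually (\<lambda>x::real. (x/3 - ln (2*x) - sqrt (2*x) * ln (2*x)) / ln (2*x) \<ge> x / (10 * ln x)) at_top"
    by real_asymp
  then obtain x0 where x0: "\<And>x. x \<ge> x0 \<Longrightarrow>
      (x/3 - ln (2*x) - sqrt (2*x) * ln (2*x)) / ln (2*x) \<ge> x / (10 * ln x)"
    unfolding eventually_at_top_linorder by blast
  define X0 where "X0 = max (2*x0+2) 12"
  have "X / (40 * ln X) \<le> real (card (dyadic_primes X))" if X: "X \<ge> X0" for X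
  proof -
    define N where "N = nat \<lfloor>X/2\<rfloor>"
    have NX: "real N \<le> X/2" "X/2 < real N + 1" using X unfolding N_def X0_def by linarith+
    have N: "N \<ge> 5" "real N \<ge> x0" "real N \<ge> X/4" using NX X unfolding X0_def by linarith+
    let ?P = "{p. prime p \<and> N < p \<and> p \<le> 2*N}"
    have "N * ln 4 / 3 \<ge> N / 3"
      using mult_left_mono[of 1 "ln 4" "real N"] exp_le by (simp add: ln_ge_iff)
    hence "real (card ?P) * ln (2*N) \<ge> N/3 - ln (2*N) - sqrt (2*N) * ln (2*N)"
      using card_primes_between_lower_bound[OF N(1)] by simp
    hence bound: "(N/3 - ln (2*N) - sqrt (2*N) * ln (2*N)) / ln (2*N) \<le> real (card ?P)"
      using N by (simp add: divide_le_eq)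
    have "0 < ln (real N)" "ln (real N) \<le> ln X" using N NX X unfolding X0_def by auto
    hence "(X/4) / (10 * ln X) \<le> N / (10 * ln N)" using N by (intro frac_le) auto
    hence "X / (40 * ln X) \<le> N / (10 * ln N)" by simp
    also have "\<dots> \<le> (N/3 - ln (2*N) - sqrt (2*N) * ln (2*N)) / ln (2*N)" using x0[OF N(2)] by simp
    also note bound
    also have "?P \<subseteq> dyadic_primes X"
    proof
      fix p assume "p \<in> ?P"
      hence "prime p" "real (N + 1) \<le> real p" "real p \<le> real (2*N)" by (simp_all only: of_nat_le_iff) auto
      thus "p \<in> dyadic_primes X" using NX by (auto simp: dyadic_primes_def)
    qed
    hence "card ?P \<le> card (dyadic_primes X)" by (rule card_mono[OF finite_dyadic_primes])
    finally show ?thesis by linarith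
  qed
  thus ?thesis unfolding eventually_at_top_linorder by blast
qed

section \<open>Collisions modulo many primes\<close>

lemma card_le_card_image_plus_collisions:
  assumes "finite T"
  shows "card T \<le> card (f ` T) + card {(x,y) \<in> T \<times> T. x \<noteq> y \<and> f x = f y}"
proof -
  define g where "g = inv_into T f"
  define R where "R = g ` f ` T"
  have RT: "R \<subseteq> T" unfolding R_def g_def by (auto intro: inv_into_into)
  have "card R \<le> card (f ` T)" unfolding R_def by (rule card_image_le) (use assms in auto)
  moreover have "card (T - R) \<le> card {(x,y) \<in> T \<times> T. x \<noteq> y \<and> f x = f y}"
  proof (rule card_inj_on_le)
    show "inj_on (\<lambda>x. (x, g (f x))) (T - R)" by (auto simp: inj_on_def)
    show "(\<lambda>x. (x, g (f x))) ` (T - R) \<subseteq> {(x,y) \<in> T \<times> T. x \<noteq> y \<and> f x = f y}"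
      unfolding R_def g_def by (auto intro: inv_into_into f_inv_into_f[symmetric])
    show "finite {(x,y) \<in> T \<times> T. x \<noteq> y \<and> f x = f y}"
      by (rule finite_subset[of _ "T \<times> T"]) (use assms in auto)
  qed
  moreover have "card T = card R + card (T - R)"
    using RT assms by (metis card_Diff_subset finite_subset le_add_diff_inverse card_mono)
  ultimately show ?thesis by linarith
qed

lemma card_prime_divisors_le_ln:
  fixes d :: int and Y :: real
  assumes "finite P" "\<forall>p\<in>P. prime p \<and> real p \<ge> Y" "Y > 1" "d \<noteq> 0"
  shows "real (card {p\<in>P. int p dvd d}) * ln Y \<le> ln \<bar>d\<bar>"
proof -
  define D where "D = {p\<in>P. int p dvd d}"
  have fD: "finite D" unfolding D_def using assms by auto
  have "\<Prod>D \<le> nat \<bar>d\<bar>"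
    using assms by (intro dvd_imp_le prod_primes_dvd) (auto simp: D_def fD)
  hence "real (\<Prod>D) \<le> \<bar>d\<bar>" by linarith
  moreover have "Y ^ card D \<le> (\<Prod>p\<in>D. real p)"
    using assms prod_mono[of D "\<lambda>_. Y" real] by (auto simp: D_def)
  ultimately have "Y ^ card D \<le> \<bar>d\<bar>" by simp
  hence "ln (Y ^ card D) \<le> ln \<bar>d\<bar>" using assms by (subst ln_le_cancel_iff) auto
  thus ?thesis unfolding D_def using assms by (simp add: ln_realpow)
qed

lemma sum_collisions_mod_primes_le:
  fixes T :: "int set" and Y B :: real
  assumes P: "finite P" "\<forall>p\<in>P. prime p \<and> real p \<ge> Y" "Y > 1"
    and T: "finite T" "\<forall>x\<in>T. \<bar>x\<bar> \<le> B" "B \<ge> 1"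
  shows "(\<Sum>p\<in>P. real (card {(x,y) \<in> T \<times> T. x \<noteq> y \<and> x mod int p = y mod int p}))
          \<le> real (card T) ^ 2 * (ln (2*B) / ln Y)"
proof -
  let ?c = "\<lambda>p z. if fst z \<noteq> snd z \<and> int p dvd fst z - snd z then 1 else (0::real)"
  have lY: "ln Y > 0" using P by simp
  have "(\<Sum>p\<in>P. real (card {(x,y) \<in> T \<times> T. x \<noteq> y \<and> x mod int p = y mod int p}))
      = (\<Sum>p\<in>P. \<Sum>z\<in>T \<times> T. ?c p z)"
  proof (intro sum.cong refl)
    fix p
    have "{(x,y) \<in> T \<times> T. x \<noteq> y \<and> x mod int p = y mod int p}
            = {z\<in>T \<times> T. fst z \<noteq> snd z \<and> int p dvd fst z - snd z}"
      by (auto simp: mod_eq_dvd_iff)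
    thus "real (card {(x,y) \<in> T \<times> T. x \<noteq> y \<and> x mod int p = y mod int p}) = (\<Sum>z\<in>T \<times> T. ?c p z)"
      using T by (simp add: sum.inter_filter[symmetric])
  qed
  also have "\<dots> = (\<Sum>z\<in>T \<times> T. \<Sum>p\<in>P. ?c p z)"
    by (rule sum.swap)
  also have "\<dots> \<le> (\<Sum>z\<in>T \<times> T. ln (2*B) / ln Y)"
  proof (rule sum_mono)
    fix z assume z: "z \<in> T \<times> T"
    show "(\<Sum>p\<in>P. ?c p z) \<le> ln (2*B) / ln Y"
    proof (cases "fst z = snd z")
      case False
      define d where "d = fst z - snd z"
      have "\<bar>real_of_int (fst z)\<bar> \<le> B" "\<bar>real_of_int (snd z)\<bar> \<le> B" using z T by auto
      hence d: "d \<noteq> 0" "\<bar>d\<bar> \<le> 2*B"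
        using False abs_triangle_ineq4[of "real_of_int (fst z)" "real_of_int (snd z)"]
        unfolding d_def by auto
      have "(\<Sum>p\<in>P. ?c p z) = real (card {p\<in>P. int p dvd d})"
        using False P by (simp add: sum.If_cases d_def Int_def conj_commute)
      also have "\<dots> \<le> ln \<bar>d\<bar> / ln Y"
        using card_prime_divisors_le_ln[OF P d(1)] lY by (simp add: le_divide_eq)
      also have "\<dots> \<le> ln (2*B) / ln Y" using d lY by (intro divide_right_mono) auto
      finally show ?thesis .
    qed (use T(3) lY in simp)
  qed
  also have "\<dots> = real (card T) ^ 2 * (ln (2*B) / ln Y)"
    using T by (simp add: power2_eq_square card_cartesian_product)
  finally show ?thesis .
qed

text \<open>A prime for which \<open>S\<close> has fewer than \<open>a\<close> residues causes more than \<open>t/2\<close> collisions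
  among any \<open>t \<approx> 2a\<close> elements of \<open>S\<close>; compare with the total number of collisions.\<close>

lemma card_primes_small_mod_image_le:
  fixes S :: "int set" and a B Y :: real
  assumes P: "finite P" "\<forall>p\<in>P. prime p \<and> real p \<ge> Y" "Y > 1"
    and S: "finite S" "\<forall>x\<in>S. \<bar>x\<bar> \<le> B" "B \<ge> 1"
    and a: "a \<ge> 1" "3 * a \<le> real (card S)"
  shows "real (card {p\<in>P. real (card ((\<lambda>x. x mod int p) ` S)) < a}) \<le> 6 * a * (ln (2*B) / ln Y)"
proof -
  define t where "t = nat \<lceil>2 * a\<rceil>"
  have t: "2 * a \<le> real t" "real t \<le> 3 * a" "t > 0" unfolding t_def using a by linarith+
  have "real t \<le> real (card S)" using t a by linarith
  then obtain T where TS: "T \<subseteq> S" and cT: "card T = t" and fT: "finite T"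
    by (metis obtain_subset_with_card_n of_nat_le_iff)
  define coll where "coll = (\<lambda>p::nat. card {(x,y) \<in> T \<times> T. x \<noteq> y \<and> x mod int p = y mod int p})"
  define Bad where "Bad = {p\<in>P. real (card ((\<lambda>x. x mod int p) ` S)) < a}"
  have coll_large: "real t / 2 \<le> real (coll p)" if "p \<in> Bad" for p
  proof -
    have "card T \<le> card ((\<lambda>x. x mod int p) ` T) + coll p"
      unfolding coll_def by (rule card_le_card_image_plus_collisions[OF fT])
    moreover have "card ((\<lambda>x. x mod int p) ` T) \<le> card ((\<lambda>x. x mod int p) ` S)"
      using TS S by (intro card_mono) auto
    ultimately have "real t \<le> real (card ((\<lambda>x. x mod int p) ` S)) + real (coll p)"
      using cT by linarith
    thus ?thesis using that t unfolding Bad_def by simp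
  qed
  define L where "L = ln (2*B) / ln Y"
  have L: "L \<ge> 0" unfolding L_def using S P by simp
  have "real t / 2 * real (card Bad) \<le> (\<Sum>p\<in>Bad. real (coll p))"
    using sum_mono[of Bad "\<lambda>_. real t / 2" "\<lambda>p. real (coll p)"] coll_large by (simp add: mult.commute)
  also have "\<dots> \<le> (\<Sum>p\<in>P. real (coll p))" using P unfolding Bad_def by (intro sum_mono2) auto
  also have "\<dots> \<le> real t ^ 2 * L"
    unfolding coll_def L_def using sum_collisions_mod_primes_le[OF P fT] TS S cT by auto
  also have "\<dots> = real t / 2 * (2 * real t * L)" by (simp add: power2_eq_square)
  finally have "real (card Bad) \<le> 2 * real t * L"
    using t by (subst (asm) mult_le_cancel_left_pos) auto
  also have "\<dots> \<le> 6 * a * L" using t L by (intro mult_right_mono) auto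
  finally show ?thesis unfolding Bad_def L_def .
qed

lemma card_dyadic_primes_small_mod_image_le:
  fixes S :: "int set" and B K C X :: real
  assumes S: "finite S" "\<forall>x\<in>S. \<bar>x\<bar> \<le> B" "B \<ge> 1" and lnB: "ln (2*B) \<le> K * real n"
    and K: "K \<ge> 1" and n: "n \<ge> 1" and X: "X \<ge> 4" and C: "4800 * K \<le> C" and XC: "C * real n ^ 2 < X"
    and cS: "X / real n \<le> real (card S)"
    and cP: "X / (40 * ln X) \<le> real (card (dyadic_primes X))"
  shows "real (card {p\<in>dyadic_primes X. real (card ((\<lambda>x. x mod int p) ` S)) < X / (C * real n ^ 2)})
           \<le> real (card (dyadic_primes X)) / 10"
proof -
  define a where "a = X / (C * real n ^ 2)"
  have Kn: "0 < K * real n" using K n by simp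
  have Cn: "4800 * K \<le> C * real n" using C K n mult_mono[of "4800 * K" C 1 "real n"] by simp
  hence Cn3: "3 \<le> C * real n" using K by linarith
  have Cn0: "C * real n ^ 2 > 0"
    using Cn K n mult_pos_pos[of "C * real n" "real n"] by (simp add: power2_eq_square mult.assoc)
  have a1: "a \<ge> 1" unfolding a_def using XC Cn0 by (simp add: le_divide_eq)
  have "3 * a = X / (C * real n / 3 * real n)" unfolding a_def by (simp add: power2_eq_square field_simps)
  also have "\<dots> \<le> X / real n" using Cn3 X n by (intro divide_left_mono) (auto simp: mult_le_cancel_right1)
  finally have "3 * a \<le> real (card S)" using cS by linarith
  have lnX: "ln X > 0" using X by simp
  have lnY: "ln X / 2 \<le> ln (X/2)"
  proof -
    have "ln X \<le> ln ((X/2) * (X/2))" using X by (subst ln_le_cancel_iff) (auto simp: field_simps)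
    also have "\<dots> = 2 * ln (X/2)" using X by (subst ln_mult) auto
    finally show ?thesis by simp
  qed
  have "real (card {p\<in>dyadic_primes X. real (card ((\<lambda>x. x mod int p) ` S)) < a})
          \<le> 6 * a * (ln (2*B) / ln (X/2))"
    using finite_dyadic_primes X S a1 \<open>3 * a \<le> real (card S)\<close>
    by (intro card_primes_small_mod_image_le) (auto simp: dyadic_primes_def)
  also have "\<dots> \<le> 6 * a * (K * real n / (ln X / 2))"
    using lnB lnY lnX Kn a1 S by (intro mult_left_mono frac_le) auto
  also have "\<dots> = (12 * K * X) / (C * real n * ln X)"
    unfolding a_def using lnX Cn0 by (simp add: power2_eq_square field_simps)
  also have "\<dots> \<le> (12 * K * X) / (4800 * K * ln X)"
    using K X lnX Cn by (intro frac_le mult_right_mono) auto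
  also have "\<dots> = X / (400 * ln X)" using K by (simp add: field_simps)
  also have "\<dots> \<le> real (card (dyadic_primes X)) / 10" using cP by (simp add: field_simps)
  finally show ?thesis unfolding a_def .
qed

section \<open>Subset sums\<close>

lemma finite_k_subset_sums: "finite Q \<Longrightarrow> finite (k_subset_sums Q k)"
  unfolding k_subset_sums_def by (auto intro: finite_subset[of _ "Pow Q"])

lemma abs_le_of_mem_k_subset_sums:
  assumes "x \<in> k_subset_sums Q k" "finite Q" "\<forall>q\<in>Q. real_of_int \<bar>q\<bar> \<le> b"
  shows "\<bar>real_of_int x\<bar> \<le> real k * b"
proof -
  obtain M where M: "M \<subseteq> Q" "card M = k" "x = w M"
    using assms(1) unfolding k_subset_sums_def by blast
  have "\<bar>real_of_int x\<bar> \<le> (\<Sum>q\<in>M. \<bar>real_of_int q\<bar>)" using M unfolding w_def by (simp add: sum_abs)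
  also have "\<dots> \<le> (\<Sum>q\<in>M. b)" using assms M by (intro sum_mono) auto
  finally show ?thesis using M by simp
qed

lemma mod_image_k_subset_sums_subset_hit_residues:
  "p > 0 \<Longrightarrow> (\<lambda>x. x mod int p) ` k_subset_sums Q k \<subseteq> hit_residues p Q k"
  unfolding k_subset_sums_def hit_residues_def by auto

lemma finite_hit_residues: "finite (hit_residues p Q k)"
  unfolding hit_residues_def by (rule finite_subset[of _ "{0..<int p}"]) auto

lemma card_hit_residues_ge_1:
  assumes "p > 0" "k \<le> card Q"
  shows "card (hit_residues p Q k) \<ge> 1"
proof -
  obtain M where "M \<subseteq> Q" "card M = k" using obtain_subset_with_card_n[OF assms(2)] by blast
  hence "w M mod int p \<in> hit_residues p Q k"
    using assms(1) mod_image_k_subset_sums_subset_hit_residues unfolding k_subset_sums_def by blast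
  thus ?thesis using finite_hit_residues by (metis One_nat_def Suc_leI card_gt_0_iff empty_iff)
qed

lemma ln_double_mult_powr_le:
  assumes "n \<ge> 1" "(c::real) \<ge> 0"
  shows "ln (2 * (real n * 2 powr (c * real n))) \<le> (2 + c) * real n"
proof -
  have "ln (2 * (real n * 2 powr (c * real n))) = ln 2 + ln (real n) + c * real n * ln 2"
    using assms by (simp add: ln_mult)
  moreover have "ln (real n) \<le> real n" using ln_le_minus_one[of "real n"] assms by simp
  moreover have "c * real n * ln 2 \<le> c * real n" using assms ln_2_less_1 by (simp add: mult_left_le)
  ultimately show ?thesis using assms ln_2_less_1 by (simp add: algebra_simps)
qed

lemma card_filter_add_card_filter_not:
  "finite A \<Longrightarrow> card {x\<in>A. P x} + card {x\<in>A. \<not> P x} = card A"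
proof -
  assume "finite A"
  have "card A = card ({x\<in>A. P x} \<union> {x\<in>A. \<not> P x})" by (rule arg_cong[where f=card]) blast
  also have "\<dots> = card {x\<in>A. P x} + card {x\<in>A. \<not> P x}"
    by (rule card_Un_disjoint) (use \<open>finite A\<close> in auto)
  finally show ?thesis by simp
qed

lemma card_dyadic_primes_hit_residues_less_le:
  assumes c: "c > 0" and C: "4800 * (2 + c) \<le> C" and XC: "C * real n ^ 2 < X"
    and cP: "X / (40 * ln X) \<le> real (card (dyadic_primes X))"
    and Q: "finite Q" "card Q \<le> n" "\<forall>q\<in>Q. real_of_int \<bar>q\<bar> \<le> 2 powr (c * real n)"
    and k: "1 \<le> k" "k \<le> card Q"
    and sums: "real (card (k_subset_sums Q k)) \<ge> real (card (subset_sums Q)) / real (card Q)"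
    and X: "4 \<le> X" "X \<le> real (card (subset_sums Q))"
  shows "real (card {p\<in>dyadic_primes X. real (card (hit_residues p Q k)) < X / (C * real n ^ 2)})
           \<le> real (card (dyadic_primes X)) / 10"
proof -
  let ?S = "k_subset_sums Q k"
  have n: "n \<ge> 1" using Q k by linarith
  have "{p\<in>dyadic_primes X. real (card (hit_residues p Q k)) < X / (C * real n ^ 2)}
          \<subseteq> {p\<in>dyadic_primes X. real (card ((\<lambda>x. x mod int p) ` ?S)) < X / (C * real n ^ 2)}"
  proof safe
    fix p assume p: "p \<in> dyadic_primes X" "real (card (hit_residues p Q k)) < X / (C * real n ^ 2)"
    hence "card ((\<lambda>x. x mod int p) ` ?S) \<le> card (hit_residues p Q k)"
      by (intro card_mono finite_hit_residues mod_image_k_subset_sums_subset_hit_residues)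
        (auto simp: dyadic_primes_def prime_gt_0_nat)
    thus "real (card ((\<lambda>x. x mod int p) ` ?S)) < X / (C * real n ^ 2)" using p by linarith
  qed
  hence "card {p\<in>dyadic_primes X. real (card (hit_residues p Q k)) < X / (C * real n ^ 2)}
          \<le> card {p\<in>dyadic_primes X. real (card ((\<lambda>x. x mod int p) ` ?S)) < X / (C * real n ^ 2)}"
    using finite_dyadic_primes by (intro card_mono) auto
  also have "real \<dots> \<le> real (card (dyadic_primes X)) / 10"
  proof (rule card_dyadic_primes_small_mod_image_le)
    have pow: "1 \<le> 2 powr (c * real n)" using c by (intro ge_one_powr_ge_zero) auto
    show "\<forall>x\<in>?S. \<bar>real_of_int x\<bar> \<le> real n * 2 powr (c * real n)"
    proof
      fix x assume "x \<in> ?S"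
      hence "\<bar>real_of_int x\<bar> \<le> real k * 2 powr (c * real n)"
        using abs_le_of_mem_k_subset_sums Q by blast
      also have "\<dots> \<le> real n * 2 powr (c * real n)" using k Q by (intro mult_right_mono) auto
      finally show "\<bar>real_of_int x\<bar> \<le> real n * 2 powr (c * real n)" .
    qed
    show "1 \<le> real n * 2 powr (c * real n)"
      using n pow mult_mono[of 1 "real n" 1 "2 powr (c * real n)"] by simp
    show "ln (2 * (real n * 2 powr (c * real n))) \<le> (2 + c) * real n"
      using n c by (intro ln_double_mult_powr_le) auto
    have "X / real n \<le> real (card (subset_sums Q)) / real n" using X n by (simp add: divide_right_mono)
    also have "\<dots> \<le> real (card (subset_sums Q)) / real (card Q)"
      using Q k by (intro divide_left_mono) auto
    finally show "X / real n \<le> real (card ?S)" using sums by linarith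
    show "finite ?S" using Q(1) by (rule finite_k_subset_sums)
  qed (use n X c C XC cP in auto)
  finally show ?thesis by simp
qed

lemma card_dyadic_primes_not_hit_many_le:
  assumes c: "c > 0" and C: "4800 * (2 + c) \<le> C"
    and dyadic: "\<And>X. C \<le> X \<Longrightarrow> X / (40 * ln X) \<le> real (card (dyadic_primes X))"
    and Q: "finite Q" "card Q \<le> n" "\<forall>q\<in>Q. real_of_int \<bar>q\<bar> \<le> 2 powr (c * real n)"
    and k: "1 \<le> k" "k \<le> card Q"
    and sums: "real (card (k_subset_sums Q k)) \<ge> real (card (subset_sums Q)) / real (card Q)"
    and X: "4 \<le> X" "X \<le> real (card (subset_sums Q))"
  shows "real (card {p\<in>dyadic_primes X. \<not> real p / (C * real n ^ 2) \<le> real (card (hit_residues p Q k))})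
           \<le> real (card (dyadic_primes X)) / 10"
proof -
  let ?P = "dyadic_primes X"
  let ?good = "\<lambda>p. real p / (C * real n ^ 2) \<le> real (card (hit_residues p Q k))"
  have n: "n \<ge> 1" using Q k by linarith
  have "C > 0" using C c by (simp add: distrib_left)
  hence Cn: "C \<le> C * real n ^ 2" "C * real n ^ 2 > 0" using n by simp_all
  show ?thesis
  proof (cases "X \<le> C * real n ^ 2")
    case True
    have "?good p" if "p \<in> ?P" for p
    proof -
      have "real p \<le> C * real n ^ 2" "p > 0"
        using that True by (auto simp: dyadic_primes_def prime_gt_0_nat)
      hence "real p / (C * real n ^ 2) \<le> 1" using Cn by (simp add: divide_le_eq)
      also have "1 \<le> real (card (hit_residues p Q k))"
        using card_hit_residues_ge_1[OF \<open>p > 0\<close> k(2)] by simp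
      finally show ?thesis .
    qed
    hence "{p\<in>?P. \<not> ?good p} = {}" by blast
    then show ?thesis by (simp only: card.empty)
  next
    case False
    have "{p\<in>?P. \<not> ?good p} \<subseteq> {p\<in>?P. real (card (hit_residues p Q k)) < X / (C * real n ^ 2)}"
    proof safe
      fix p assume "p \<in> ?P" "\<not> ?good p"
      moreover have "real p / (C * real n ^ 2) \<le> X / (C * real n ^ 2)"
        using \<open>p \<in> ?P\<close> Cn by (intro divide_right_mono) (auto simp: dyadic_primes_def)
      ultimately show "real (card (hit_residues p Q k)) < X / (C * real n ^ 2)" by linarith
    qed
    hence "card {p\<in>?P. \<not> ?good p} \<le> card {p\<in>?P. real (card (hit_residues p Q k)) < X / (C * real n ^ 2)}"
      using finite_dyadic_primes by (intro card_mono) auto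
    hence "real (card {p\<in>?P. \<not> ?good p})
             \<le> real (card {p\<in>?P. real (card (hit_residues p Q k)) < X / (C * real n ^ 2)})"
      by (rule of_nat_mono)
    also have "\<dots> \<le> real (card ?P) / 10"
    proof (rule card_dyadic_primes_hit_residues_less_le[OF c C _ dyadic Q k sums X])
      show "C * real n ^ 2 < X" using False by simp
      thus "C \<le> X" using Cn(1) by linarith
    qed
    finally show ?thesis .
  qed
qed

lemma card_dyadic_primes_hit_many_residues_ge:
  assumes c: "c > 0" and C: "4800 * (2 + c) \<le> C"
    and dyadic: "\<And>X. C \<le> X \<Longrightarrow> X / (40 * ln X) \<le> real (card (dyadic_primes X))"
    and Q: "finite Q" "card Q \<le> n" "\<forall>q\<in>Q. real_of_int \<bar>q\<bar> \<le> 2 powr (c * real n)"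
    and k: "1 \<le> k" "k \<le> card Q"
    and sums: "real (card (k_subset_sums Q k)) \<ge> real (card (subset_sums Q)) / real (card Q)"
    and X: "4 \<le> X" "X \<le> real (card (subset_sums Q))"
  shows "9 / 10 * real (card {p::nat. prime p \<and> X / 2 \<le> real p \<and> real p \<le> X})
           \<le> real (card {p::nat. prime p \<and> X / 2 \<le> real p \<and> real p \<le> X
                        \<and> real (card (hit_residues p Q k)) \<ge> real p / (C * real n ^ 2)})"
proof -
  let ?P = "dyadic_primes X"
  let ?good = "\<lambda>p. real p / (C * real n ^ 2) \<le> real (card (hit_residues p Q k))"
  have "card {p\<in>?P. ?good p} + card {p\<in>?P. \<not> ?good p} = card ?P"
    by (rule card_filter_add_card_filter_not[OF finite_dyadic_primes])
  hence "real (card {p\<in>?P. ?good p}) + real (card {p\<in>?P. \<not> ?good p}) = real (card ?P)"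
    by (simp flip: of_nat_add)
  hence "9 / 10 * real (card ?P) \<le> real (card {p\<in>?P. ?good p})"
    using card_dyadic_primes_not_hit_many_le[OF c C dyadic Q k sums X] by linarith
  moreover have "{p\<in>?P. ?good p} = {p::nat. prime p \<and> X / 2 \<le> real p \<and> real p \<le> X
                        \<and> real (card (hit_residues p Q k)) \<ge> real p / (C * real n ^ 2)}"
    by (auto simp: dyadic_primes_def)
  moreover have "?P = {p::nat. prime p \<and> X / 2 \<le> real p \<and> real p \<le> X}"
    by (simp add: dyadic_primes_def)
  ultimately show ?thesis by simp
qed

theorem mainTheorem8:
  fixes c :: real
  assumes "c > 0"
  shows "\<exists>C::real > 0. \<forall>(n::nat) (Q::int set) (k::nat) (X::real).
    finite Q \<and> card Q \<le> n \<and> (\<forall>q\<in>Q. real_of_int \<bar>q\<bar> \<le> 2 powr (c * real n))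
    \<and> 1 \<le> k \<and> k \<le> card Q
    \<and> real (card (k_subset_sums Q k)) \<ge> real (card (subset_sums Q)) / real (card Q)
    \<and> 4 \<le> X \<and> X \<le> real (card (subset_sums Q))
    \<longrightarrow> real (card {p::nat. prime p \<and> X / 2 \<le> real p \<and> real p \<le> X
                        \<and> real (card (hit_residues p Q k)) \<ge> real p / (C * real n ^ 2)})
        \<ge> 9 / 10 * real (card {p::nat. prime p \<and> X / 2 \<le> real p \<and> real p \<le> X})"
proof -
  obtain X0 where X0: "\<And>X. X \<ge> X0 \<Longrightarrow> X / (40 * ln X) \<le> real (card (dyadic_primes X))"
    using eventually_card_dyadic_primes_ge unfolding eventually_at_top_linorder by blast
  define C where "C = max X0 (4800 * (2 + c))"
  have C: "4800 * (2 + c) \<le> C" "C > 0" using assms unfolding C_def by auto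
  have dyadic: "X / (40 * ln X) \<le> real (card (dyadic_primes X))" if "C \<le> X" for X
    using that X0 unfolding C_def by simp
  show ?thesis
    using C(2) card_dyadic_primes_hit_many_residues_ge[OF assms C(1) dyadic] by blast
qed

end
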